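(* $C_{AD}(3,4)=C_{CD}(3,4)=4$.
   Context: There are $n$ nodes labeled $1,\dots,n$ (here $n=3$); node $i$ privately holds an input $x_i\in\{1,\dots,M\}$ (here $M=4$). Communication is over private point-to-point links of a fully connected synchronous network. A deterministic protocol $P$ is a fixed finite schedule of steps $l=1,\dots,L(P)$; in step $l$ a prescribed node $T_l$ sends to a prescribed node $R_l\neq T_l$ one symbol $f_l(x_{T_l},T_l^+(l))$, where $T_l^+(l)$ is the sequence of symbols $T_l$ has received in steps $1,\dots,l-1$; only $R_l$ receives it. Its complexity is $C(P)=\sum_{l}\log_2 S_l(P)$, with $S_l(P)$ the number of distinct values of the step-$l$ symbol over all inputs in $\{1,\dots,M\}^n$. At the end each node $i$ outputs a bit $EQ_i$ depending on $x_i$ and the symbols it received. $P$ solves MEQ-AD$(n,M)$ if for every input, $EQ_1=\cdots=EQ_n=0$ iff $x_1=\cdots=x_n$; $P$ solves MEQ-CD$(n,M)$ if for every input, $EQ_n=0$ iff $x_1=\cdots=x_n$. $C_{AD}(n,M)$ and $C_{CD}(n,M)$ are the infima of $C(P)$ over protocols solving MEQ-AD$(n,M)$, respectively MEQ-CD$(n,M)$. *)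

theory Defs
  imports Complex_Main "HOL-Library.FuncSet"
begin

text \<open>Symbols are encoded as natural numbers (any finite symbol alphabet embeds
injectively into nat, which does not change the counts S_l).
A step is (T, R, f): sender T, receiver R, and the message function f applied
to the sender's input and the list of symbols the sender has received so far
(in chronological order).  A protocol is a list of steps together with an
output function: out i xi rcv is the bit EQ_i (False = 0, True = 1).\<close>

type_synonym step = "nat \<times> nat \<times> (nat \<Rightarrow> nat list \<Rightarrow> nat)"
type_synonym protocol = "step list \<times> (nat \<Rightarrow> nat \<Rightarrow> nat list \<Rightarrow> bool)"

definition sender :: "step \<Rightarrow> nat" where "sender s = fst s"
definition receiver :: "step \<Rightarrow> nat" where "receiver s = fst (snd s)"
definition msgfun :: "step \<Rightarrow> nat \<Rightarrow> nat list \<Rightarrow> nat" where "msgfun s = snd (snd s)"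

fun exec :: "step list \<Rightarrow> (nat \<Rightarrow> nat) \<Rightarrow> (nat \<times> nat) list \<Rightarrow> nat list" where
  "exec [] x h = []"
| "exec (p # ps) x h =
     (let s = msgfun p (x (sender p)) (map snd (filter (\<lambda>(r, _). r = sender p) h))
      in s # exec ps x (h @ [(receiver p, s)]))"

definition symbols :: "step list \<Rightarrow> (nat \<Rightarrow> nat) \<Rightarrow> nat list" where
  "symbols ps x = exec ps x []"

definition received :: "step list \<Rightarrow> (nat \<Rightarrow> nat) \<Rightarrow> nat \<Rightarrow> nat list" where
  "received ps x i = map snd (filter (\<lambda>(r, _). r = i) (zip (map receiver ps) (symbols ps x)))"

definition inputs :: "nat \<Rightarrow> nat \<Rightarrow> (nat \<Rightarrow> nat) set" where
  "inputs n M = PiE {1..n} (\<lambda>_. {1..M})"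

definition valid_protocol :: "nat \<Rightarrow> protocol \<Rightarrow> bool" where
  "valid_protocol n P \<longleftrightarrow> (\<forall>s \<in> set (fst P).
      sender s \<in> {1..n} \<and> receiver s \<in> {1..n} \<and> sender s \<noteq> receiver s)"

definition S :: "nat \<Rightarrow> nat \<Rightarrow> protocol \<Rightarrow> nat \<Rightarrow> nat" where
  "S n M P l = card ((\<lambda>x. symbols (fst P) x ! l) ` inputs n M)"

definition complexity :: "nat \<Rightarrow> nat \<Rightarrow> protocol \<Rightarrow> real" where
  "complexity n M P = (\<Sum>l < length (fst P). log 2 (real (S n M P l)))"

definition EQ :: "protocol \<Rightarrow> (nat \<Rightarrow> nat) \<Rightarrow> nat \<Rightarrow> bool" where
  "EQ P x i = snd P i (x i) (received (fst P) x i)"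

definition all_equal :: "nat \<Rightarrow> (nat \<Rightarrow> nat) \<Rightarrow> bool" where
  "all_equal n x \<longleftrightarrow> (\<forall>i \<in> {1..n}. \<forall>j \<in> {1..n}. x i = x j)"

definition solves_AD :: "nat \<Rightarrow> nat \<Rightarrow> protocol \<Rightarrow> bool" where
  "solves_AD n M P \<longleftrightarrow> (\<forall>x \<in> inputs n M.
      (\<forall>i \<in> {1..n}. \<not> EQ P x i) \<longleftrightarrow> all_equal n x)"

definition solves_CD :: "nat \<Rightarrow> nat \<Rightarrow> protocol \<Rightarrow> bool" where
  "solves_CD n M P \<longleftrightarrow> (\<forall>x \<in> inputs n M. (\<not> EQ P x n) \<longleftrightarrow> all_equal n x)"

definition C_AD :: "nat \<Rightarrow> nat \<Rightarrow> real" where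
  "C_AD n M = Inf {complexity n M P | P. valid_protocol n P \<and> solves_AD n M P}"

definition C_CD :: "nat \<Rightarrow> nat \<Rightarrow> real" where
  "C_CD n M = Inf {complexity n M P | P. valid_protocol n P \<and> solves_CD n M P}"

end

theory Submission
  imports Defs
begin

text \<open>If a protocol for three nodes with inputs in {1..4} has complexity below 4, then
  \<Prod> S_l \<le> 15. On the constant inputs (c,c,c) the three links carry transcripts
  \<tau>12, \<tau>13, \<tau>23 with |\<tau>12|\<sqdot>|\<tau>13|\<sqdot>|\<tau>23| \<le> 15, so some link has at most 3 transcripts
  while the counts of the other two multiply to at most 4; pigeonhole gives p, q, r, not all equal,
  with \<tau>12(p) = \<tau>12(q), \<tau>13(p) = \<tau>13(r) and \<tau>23(q) = \<tau>23(r). On input (p,q,r) every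
  node then receives exactly what it receives on its own constant input, so it
  reports equality although the inputs differ. Conversely, letting nodes 1 and 2
  send their inputs to node 3 costs 2 + 2 bits.\<close>

lemma exec_append:
  "exec (ps @ qs) x h = exec ps x h @ exec qs x (h @ zip (map receiver ps) (exec ps x h))"
  by (induction ps arbitrary: h) (simp_all add: Let_def)

lemma length_exec [simp]: "length (exec ps x h) = length ps"
  by (induction ps arbitrary: h) (simp_all add: Let_def)

lemma length_symbols [simp]: "length (symbols ps x) = length ps"
  by (simp add: symbols_def)

lemma symbols_snoc:
  "symbols (ps @ [p]) x = symbols ps x @
     [msgfun p (x (sender p))
        (map snd (filter (\<lambda>(r, _). r = sender p) (zip (map receiver ps) (symbols ps x))))]"
  by (simp add: symbols_def exec_append Let_def)

lemma nth_symbols_snoc: "l < length ps \<Longrightarrow> symbols (ps @ [p]) x ! l = symbols ps x ! l"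
  by (simp add: symbols_snoc nth_append)

lemma map_snd_filter_zip_cong:
  assumes "length xs = length rs" "length ys = length rs"
    and "\<And>l. l < length rs \<Longrightarrow> rs ! l = i \<Longrightarrow> xs ! l = ys ! l"
  shows "map snd (filter (\<lambda>(r, _). r = i) (zip rs xs)) = map snd (filter (\<lambda>(r, _). r = i) (zip rs ys))"
  using assms
proof (induction rs arbitrary: xs ys)
  case (Cons a rs)
  then obtain x xs' y ys' where "xs = x # xs'" "ys = y # ys'"
    by (auto simp: length_Suc_conv)
  moreover have "map snd (filter (\<lambda>(r, _). r = i) (zip rs xs')) = map snd (filter (\<lambda>(r, _). r = i) (zip rs ys'))"
    using Cons.prems calculation by (intro Cons.IH) force+
  ultimately show ?case
    using Cons.prems(3)[of 0] by auto
qed simp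


section \<open>Cut and paste\<close>

text \<open>v i is the input vector node i is to be fooled into believing in.\<close>

definition links_agree :: "step list \<Rightarrow> (nat \<Rightarrow> nat \<Rightarrow> nat) \<Rightarrow> bool" where
  "links_agree ps v \<longleftrightarrow>
     (\<forall>l < length ps. symbols ps (v (sender (ps ! l))) ! l = symbols ps (v (receiver (ps ! l))) ! l)"

lemma links_agree_snocD:
  assumes "links_agree (ps @ [p]) v"
  shows "links_agree ps v"
  unfolding links_agree_def
proof (intro allI impI)
  fix l assume "l < length ps"
  then show "symbols ps (v (sender (ps ! l))) ! l = symbols ps (v (receiver (ps ! l))) ! l"
    using assms[unfolded links_agree_def, rule_format, of l] by (simp add: nth_append nth_symbols_snoc)
qed

lemma symbols_cut_paste:
  assumes "\<forall>s \<in> set ps. sender s \<in> N" and "\<forall>i \<in> N. v i i = w i" and "links_agree ps v"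
  shows "\<forall>l < length ps. symbols ps w ! l = symbols ps (v (sender (ps ! l))) ! l"
  using assms(1,3)
proof (induction ps rule: rev_induct)
  case (snoc p ps)
  then have agree: "links_agree ps v"
    and IH: "\<forall>l < length ps. symbols ps w ! l = symbols ps (v (sender (ps ! l))) ! l"
    by (auto dest: links_agree_snocD)
  have same_view: "symbols ps w ! l = symbols ps (v T) ! l"
    if "l < length ps" "receiver (ps ! l) = T" for l T
    using IH agree that unfolding links_agree_def by metis
  let ?T = "sender p"
  have "map snd (filter (\<lambda>(r, _). r = ?T) (zip (map receiver ps) (symbols ps w)))
      = map snd (filter (\<lambda>(r, _). r = ?T) (zip (map receiver ps) (symbols ps (v ?T))))"
    by (rule map_snd_filter_zip_cong) (simp_all add: same_view)
  moreover have "v ?T ?T = w ?T"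
    using snoc.prems(1) assms(2) by simp
  ultimately show ?case
    using IH by (auto simp: less_Suc_eq nth_append symbols_snoc)
qed simp

lemma received_cut_paste:
  assumes "\<forall>s \<in> set ps. sender s \<in> N" and "\<forall>i \<in> N. v i i = w i" and "links_agree ps v"
  shows "received ps w i = received ps (v i) i"
  unfolding received_def
proof (rule map_snd_filter_zip_cong)
  fix l assume "l < length (map receiver ps)" "map receiver ps ! l = i"
  then show "symbols ps w ! l = symbols ps (v i) ! l"
    using symbols_cut_paste[OF assms] assms(3) unfolding links_agree_def by auto
qed simp_all

lemma EQ_cut_paste:
  assumes "valid_protocol n P" and "\<forall>i \<in> {1..n}. v i i = w i" and "links_agree (fst P) v"
    and "i \<in> {1..n}"
  shows "EQ P w i = EQ P (v i) i"
proof -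
  have "\<forall>s \<in> set (fst P). sender s \<in> {1..n}"
    using assms(1) unfolding valid_protocol_def by blast
  then show ?thesis
    using received_cut_paste[OF _ assms(2,3)] assms(2,4) unfolding EQ_def by simp
qed

lemma fooled_not_solves:
  assumes "w \<in> inputs n M" and "\<not> all_equal n w" and "1 \<le> n"
    and "\<And>i. i \<in> {1..n} \<Longrightarrow> v i \<in> inputs n M \<and> all_equal n (v i) \<and> EQ P w i = EQ P (v i) i"
  shows "\<not> solves_AD n M P" and "\<not> solves_CD n M P"
proof -
  show "\<not> solves_AD n M P"
  proof
    assume AD: "solves_AD n M P"
    have "\<not> EQ P w i" if i: "i \<in> {1..n}" for i
    proof -
      have "\<not> EQ P (v i) i"
        using AD assms(4)[OF i] i unfolding solves_AD_def by blast
      then show ?thesis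
        using assms(4)[OF i] by simp
    qed
    then show False
      using AD assms(1,2) unfolding solves_AD_def by blast
  qed
  show "\<not> solves_CD n M P"
  proof
    assume CD: "solves_CD n M P"
    have n: "n \<in> {1..n}"
      using assms(3) by simp
    then have "\<not> EQ P w n"
      using CD assms(4)[OF n] unfolding solves_CD_def by simp
    then show False
      using CD assms(1,2) unfolding solves_CD_def by blast
  qed
qed

section \<open>Counting\<close>

lemma exists_triangle_collision:
  fixes f :: "'c \<Rightarrow> 'a" and g :: "'c \<Rightarrow> 'b" and h :: "'c \<Rightarrow> 'd"
  assumes "finite A" and "card (f ` A) * card (g ` A) \<le> card A" and "card (h ` A) < card A"
  shows "\<exists>p\<in>A. \<exists>q\<in>A. \<exists>r\<in>A. \<not> (p = q \<and> q = r) \<and> f p = f q \<and> g p = g r \<and> h q = h r"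
proof (cases "inj_on (\<lambda>c. (f c, g c)) A")
  case False
  then show ?thesis
    unfolding inj_on_def by blast
next
  case True
  have sub: "(\<lambda>c. (f c, g c)) ` A \<subseteq> f ` A \<times> g ` A"
    by auto
  have "card A \<le> card (f ` A \<times> g ` A)"
    using card_mono[OF _ sub] card_image[OF True] assms(1) by simp
  then have "(\<lambda>c. (f c, g c)) ` A = f ` A \<times> g ` A"
    using card_subset_eq[OF _ sub] card_image[OF True] assms(1,2) by (simp add: card_cartesian_product)
  moreover obtain q r where "q \<in> A" "r \<in> A" "q \<noteq> r" "h q = h r"
  proof -
    have "\<not> inj_on h A"
      using assms(3) card_image by fastforce
    then show ?thesis
      using that unfolding inj_on_def by blast
  qed
  ultimately obtain p where "p \<in> A" "(f q, g r) = (f p, g p)"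
    by (metis (no_types, lifting) imageE mem_Sigma_iff imageI)
  with \<open>q \<in> A\<close> \<open>r \<in> A\<close> \<open>q \<noteq> r\<close> \<open>h q = h r\<close> show ?thesis
    by (metis Pair_inject)
qed

lemma factor_bound_15:
  fixes a b c :: nat
  assumes "a \<in> {1..4}" "b \<in> {1..4}" "c \<in> {1..4}" "a * b * c \<le> 15"
  shows "a * b \<le> 4 \<and> c \<le> 3 \<or> a * c \<le> 4 \<and> b \<le> 3 \<or> b * c \<le> 4 \<and> a \<le> 3"
proof -
  have "a \<in> {1,2,3,4}" "b \<in> {1,2,3,4}" "c \<in> {1,2,3,4}"
    using assms(1-3) by auto
  then show ?thesis
    using assms(4) by auto
qed

lemma exists_triangle_collision_card_4:
  fixes F12 F13 F23 :: "'c \<Rightarrow> 'a"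
  assumes "card A = 4" and "card (F12 ` A) * card (F13 ` A) * card (F23 ` A) \<le> 15"
  shows "\<exists>p\<in>A. \<exists>q\<in>A. \<exists>r\<in>A. \<not> (p = q \<and> q = r) \<and> F12 p = F12 q \<and> F13 p = F13 r \<and> F23 q = F23 r"
proof -
  have fin: "finite A"
    using assms(1) card_ge_0_finite by force
  have bounds: "card (F ` A) \<in> {1..4}" for F :: "'c \<Rightarrow> 'a"
    using fin assms(1) card_image_le[OF fin, of F] by (auto simp: Suc_le_eq card_gt_0_iff)
  have "card (F12 ` A) * card (F13 ` A) \<le> 4 \<and> card (F23 ` A) \<le> 3
      \<or> card (F12 ` A) * card (F23 ` A) \<le> 4 \<and> card (F13 ` A) \<le> 3
      \<or> card (F13 ` A) * card (F23 ` A) \<le> 4 \<and> card (F12 ` A) \<le> 3"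
    using factor_bound_15[OF bounds bounds bounds assms(2)] .
  then show ?thesis
  proof (elim disjE)
    assume "card (F12 ` A) * card (F13 ` A) \<le> 4 \<and> card (F23 ` A) \<le> 3"
    then show ?thesis
      using exists_triangle_collision[OF fin, of F12 F13 F23] assms(1) by simp
  next
    assume "card (F12 ` A) * card (F23 ` A) \<le> 4 \<and> card (F13 ` A) \<le> 3"
    then show ?thesis
      using exists_triangle_collision[OF fin, of F12 F23 F13] assms(1) by (simp, metis)
  next
    assume "card (F13 ` A) * card (F23 ` A) \<le> 4 \<and> card (F12 ` A) \<le> 3"
    then show ?thesis
      using exists_triangle_collision[OF fin, of F13 F23 F12] assms(1) by (simp, metis)
  qed
qed


lemma inputs_ne: "1 \<le> M \<Longrightarrow> inputs n M \<noteq> {}"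
  unfolding inputs_def by (simp add: PiE_eq_empty_iff)

lemma finite_inputs: "finite (inputs n M)"
  unfolding inputs_def by (simp add: finite_PiE)

lemma image_component_inputs: "i \<in> {1..n} \<Longrightarrow> (\<lambda>x. x i) ` inputs n M = {1..M}"
proof (intro equalityI subsetI)
  fix c assume "i \<in> {1..n}" "c \<in> {1..M}"
  then have "restrict (\<lambda>_. c) {1..n} \<in> inputs n M" "restrict (\<lambda>_. c) {1..n} i = c"
    unfolding inputs_def by auto
  then show "c \<in> (\<lambda>x. x i) ` inputs n M"
    by (metis image_eqI)
qed (auto simp: inputs_def)

lemma S_pos: "1 \<le> M \<Longrightarrow> 0 < S n M P l"
  unfolding S_def using inputs_ne finite_inputs by (simp add: card_gt_0_iff)

lemma complexity_eq_log_prod: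
  assumes "1 \<le> M"
  shows "complexity n M P = log 2 (\<Prod>l < length (fst P). real (S n M P l))"
  using S_pos[OF assms]
  by (simp add: complexity_def log_def ln_prod sum_divide_distrib)

lemma prod_S_le_15:
  assumes "1 \<le> M" and "complexity n M P < 4"
  shows "(\<Prod>l < length (fst P). S n M P l) \<le> 15"
proof -
  have "0 < (\<Prod>l < length (fst P). real (S n M P l))"
    using S_pos[OF assms(1)] by (simp add: prod_pos)
  then have "(\<Prod>l < length (fst P). real (S n M P l)) < 2 powr 4"
    using assms by (simp add: complexity_eq_log_prod log_less_iff)
  then have "real (\<Prod>l < length (fst P). S n M P l) < 16"
    by simp
  then show ?thesis
    by linarith
qed

definition link_steps :: "step list \<Rightarrow> nat set \<Rightarrow> nat set" where
  "link_steps ps e = {l. l < length ps \<and> {sender (ps ! l), receiver (ps ! l)} = e}"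

definition link_transcript :: "step list \<Rightarrow> nat set \<Rightarrow> (nat \<Rightarrow> nat) \<Rightarrow> nat \<Rightarrow> nat" where
  "link_transcript ps e x = restrict (\<lambda>l. symbols ps x ! l) (link_steps ps e)"

lemma finite_link_steps [simp]: "finite (link_steps ps e)"
  unfolding link_steps_def by simp

lemma card_link_transcripts_le:
  assumes "X \<subseteq> inputs n M"
  shows "card (link_transcript (fst P) e ` X) \<le> (\<Prod>l \<in> link_steps (fst P) e. S n M P l)"
proof -
  have "link_transcript (fst P) e ` X
      \<subseteq> (\<Pi>\<^sub>E l \<in> link_steps (fst P) e. (\<lambda>x. symbols (fst P) x ! l) ` inputs n M)"
    using assms by (auto simp: link_transcript_def restrict_PiE_iff)
  then have "card (link_transcript (fst P) e ` X)
      \<le> card (\<Pi>\<^sub>E l \<in> link_steps (fst P) e. (\<lambda>x. symbols (fst P) x ! l) ` inputs n M)"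
    by (rule card_mono[rotated]) (simp add: finite_PiE finite_inputs)
  then show ?thesis
    by (simp add: card_PiE S_def)
qed

lemma valid_protocol_nth:
  assumes "valid_protocol n P" and "l < length (fst P)"
  shows "sender (fst P ! l) \<in> {1..n}" "receiver (fst P ! l) \<in> {1..n}"
    "sender (fst P ! l) \<noteq> receiver (fst P ! l)"
  using assms nth_mem[OF assms(2)] unfolding valid_protocol_def by blast+

lemma prod_split_links_3:
  fixes f :: "nat \<Rightarrow> 'a :: comm_monoid_mult"
  assumes "valid_protocol 3 P"
  shows "(\<Prod>l < length (fst P). f l)
    = (\<Prod>l \<in> link_steps (fst P) {1,2}. f l) * (\<Prod>l \<in> link_steps (fst P) {1,3}. f l)
      * (\<Prod>l \<in> link_steps (fst P) {2,3}. f l)"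
proof -
  have "{..<length (fst P)} = link_steps (fst P) {1,2} \<union> link_steps (fst P) {1,3} \<union> link_steps (fst P) {2,3}"
  proof (intro equalityI subsetI)
    fix l assume "l \<in> {..<length (fst P)}"
    then have l: "l < length (fst P)"
      by simp
    then have "sender (fst P ! l) \<in> {1,2,3}" "receiver (fst P ! l) \<in> {1,2,3}"
      "sender (fst P ! l) \<noteq> receiver (fst P ! l)"
      using valid_protocol_nth[OF assms l] by auto
    then show "l \<in> link_steps (fst P) {1,2} \<union> link_steps (fst P) {1,3} \<union> link_steps (fst P) {2,3}"
      using l unfolding link_steps_def by (auto simp: insert_commute)
  qed (auto simp: link_steps_def)
  moreover have "link_steps (fst P) {1,2} \<inter> link_steps (fst P) {1,3} = {}"
    "(link_steps (fst P) {1,2} \<union> link_steps (fst P) {1,3}) \<inter> link_steps (fst P) {2,3} = {}"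
    unfolding link_steps_def by (auto simp: doubleton_eq_iff)
  ultimately show ?thesis
    by (simp add: prod.union_disjoint)
qed


definition input3 :: "nat \<Rightarrow> nat \<Rightarrow> nat \<Rightarrow> nat \<Rightarrow> nat" where
  "input3 p q r = (\<lambda>i. if i = 1 then p else if i = 2 then q else if i = 3 then r else undefined)"

definition diag3 :: "nat \<Rightarrow> nat \<Rightarrow> nat" where
  "diag3 c = input3 c c c"

lemma input3_in_inputs: "p \<in> {1..4} \<Longrightarrow> q \<in> {1..4} \<Longrightarrow> r \<in> {1..4} \<Longrightarrow> input3 p q r \<in> inputs 3 4"
  unfolding inputs_def input3_def by (auto simp: PiE_iff extensional_def)

lemma diag3_in_inputs: "c \<in> {1..4} \<Longrightarrow> diag3 c \<in> inputs 3 4"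
  unfolding diag3_def by (rule input3_in_inputs)

lemma all_equal_3: "all_equal 3 x \<longleftrightarrow> x 1 = x 3 \<and> x 2 = x 3"
  unfolding all_equal_def by (auto simp: atLeastAtMost_iff le_Suc_eq numeral_eq_Suc)

lemma fooling_triple_exists:
  assumes "valid_protocol 3 P" and "complexity 3 4 P < 4"
  shows "\<exists>p\<in>{1..4}. \<exists>q\<in>{1..4}. \<exists>r\<in>{1..4}. \<not> (p = q \<and> q = r)
    \<and> link_transcript (fst P) {1,2} (diag3 p) = link_transcript (fst P) {1,2} (diag3 q)
    \<and> link_transcript (fst P) {1,3} (diag3 p) = link_transcript (fst P) {1,3} (diag3 r)
    \<and> link_transcript (fst P) {2,3} (diag3 q) = link_transcript (fst P) {2,3} (diag3 r)"
proof -
  let ?\<tau> = "\<lambda>e c. link_transcript (fst P) e (diag3 c)"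
  have "diag3 ` {1..4} \<subseteq> inputs 3 4"
    using diag3_in_inputs by blast
  then have "card (?\<tau> e ` {1..4}) \<le> (\<Prod>l \<in> link_steps (fst P) e. S 3 4 P l)" for e
    using card_link_transcripts_le by (metis image_image)
  then have "card (?\<tau> {1,2} ` {1..4}) * card (?\<tau> {1,3} ` {1..4}) * card (?\<tau> {2,3} ` {1..4})
      \<le> (\<Prod>l < length (fst P). S 3 4 P l)"
    unfolding prod_split_links_3[OF assms(1)] by (intro mult_le_mono)
  also have "\<dots> \<le> 15"
    using prod_S_le_15 assms(2) by simp
  finally show ?thesis
    using exists_triangle_collision_card_4[of "{1..4::nat}"] by simp
qed

lemma links_agree_input3:
  assumes "valid_protocol 3 P"
    and "link_transcript (fst P) {1,2} (diag3 p) = link_transcript (fst P) {1,2} (diag3 q)"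
    and "link_transcript (fst P) {1,3} (diag3 p) = link_transcript (fst P) {1,3} (diag3 r)"
    and "link_transcript (fst P) {2,3} (diag3 q) = link_transcript (fst P) {2,3} (diag3 r)"
  shows "links_agree (fst P) (\<lambda>i. diag3 (input3 p q r i))"
  unfolding links_agree_def
proof (intro allI impI)
  fix l assume l: "l < length (fst P)"
  define T R where "T = sender (fst P ! l)" and "R = receiver (fst P ! l)"
  have "T \<in> {1,2,3}" "R \<in> {1,2,3}" "T \<noteq> R"
    using valid_protocol_nth[OF assms(1) l] unfolding T_def R_def by auto
  then have "link_transcript (fst P) {T,R} (diag3 (input3 p q r T))
      = link_transcript (fst P) {T,R} (diag3 (input3 p q r R))"
    using assms(2-4) by (auto simp: input3_def insert_commute)
  moreover have "l \<in> link_steps (fst P) {T,R}"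
    using l unfolding link_steps_def T_def R_def by simp
  ultimately show "symbols (fst P) (diag3 (input3 p q r T)) ! l = symbols (fst P) (diag3 (input3 p q r R)) ! l"
    unfolding link_transcript_def by (metis restrict_apply')
qed

lemma complexity_ge_4:
  assumes "valid_protocol 3 P" and "solves_AD 3 4 P \<or> solves_CD 3 4 P"
  shows "4 \<le> complexity 3 4 P"
proof (rule ccontr)
  assume "\<not> 4 \<le> complexity 3 4 P"
  then obtain p q r where pqr: "p \<in> {1..4}" "q \<in> {1..4}" "r \<in> {1..4}" "\<not> (p = q \<and> q = r)"
    and links: "links_agree (fst P) (\<lambda>i. diag3 (input3 p q r i))"
    using fooling_triple_exists[OF assms(1)] links_agree_input3[OF assms(1)] by (meson not_le)
  define w where "w = input3 p q r"
  define v where "v i = diag3 (w i)" for i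
  have "EQ P w i = EQ P (v i) i" if "i \<in> {1..3}" for i
    using EQ_cut_paste[OF assms(1) _ links[folded w_def v_def] that]
    by (auto simp: v_def diag3_def input3_def)
  moreover have "v i \<in> inputs 3 4" "all_equal 3 (v i)" if "i \<in> {1..3}" for i
  proof -
    have "w i \<in> {1..4}"
      using that pqr(1-3) by (auto simp: w_def input3_def numeral_eq_Suc le_Suc_eq)
    then show "v i \<in> inputs 3 4" "all_equal 3 (v i)"
      unfolding v_def by (simp_all only: diag3_in_inputs) (simp add: all_equal_3 diag3_def input3_def)
  qed
  moreover have "w \<in> inputs 3 4"
    using pqr(1-3) unfolding w_def by (rule input3_in_inputs)
  moreover have "\<not> all_equal 3 w"
    using pqr(4) by (auto simp: w_def all_equal_3 input3_def)
  ultimately have "\<not> solves_AD 3 4 P" "\<not> solves_CD 3 4 P"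
    using fooled_not_solves[of w 3 4 v P] by auto
  with assms(2) show False
    by blast
qed


section \<open>A protocol of complexity 4\<close>

definition forward_to_3 :: protocol where
  "forward_to_3 = ([(1, 3, \<lambda>xi _. xi), (2, 3, \<lambda>xi _. xi)], \<lambda>i xi rcv. i = 3 \<and> rcv \<noteq> [xi, xi])"

lemma symbols_forward_to_3: "symbols (fst forward_to_3) x = [x 1, x 2]"
  by (simp add: forward_to_3_def symbols_def msgfun_def sender_def receiver_def)

lemma received_forward_to_3: "received (fst forward_to_3) x 3 = [x 1, x 2]"
  unfolding received_def symbols_forward_to_3 by (simp add: forward_to_3_def receiver_def)

lemma EQ_forward_to_3: "EQ forward_to_3 x i \<longleftrightarrow> i = 3 \<and> \<not> all_equal 3 x"
proof -
  have "snd forward_to_3 i xi rcv \<longleftrightarrow> i = 3 \<and> rcv \<noteq> [xi, xi]" for xi rcv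
    by (simp add: forward_to_3_def)
  then show ?thesis
    unfolding EQ_def by (auto simp: received_forward_to_3 all_equal_3)
qed

lemma valid_forward_to_3: "valid_protocol 3 forward_to_3"
  by (simp add: valid_protocol_def forward_to_3_def sender_def receiver_def)

lemma solves_forward_to_3: "solves_AD 3 4 forward_to_3" "solves_CD 3 4 forward_to_3"
  unfolding solves_AD_def solves_CD_def EQ_forward_to_3 by auto

lemma complexity_forward_to_3: "complexity 3 4 forward_to_3 = 4"
proof -
  have "S 3 4 forward_to_3 l = 4" if "l < 2" for l
    using that image_component_inputs[of 1 3 4] image_component_inputs[of 2 3 4]
    by (auto simp: S_def symbols_forward_to_3 less_2_cases_iff)
  moreover have "log 2 (4 :: real) = 2"
    using log_pow_cancel[of "2 :: real" 2] by simp
  ultimately show ?thesis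
    by (simp add: complexity_def forward_to_3_def numeral_2_eq_2)
qed

theorem mainTheorem9:
  shows "C_AD 3 4 = 4 \<and> C_CD 3 4 = 4"
proof -
  have "Inf {complexity 3 4 P | P. valid_protocol 3 P \<and> Q P} = 4"
    if "Q forward_to_3" and "\<And>P. Q P \<Longrightarrow> solves_AD 3 4 P \<or> solves_CD 3 4 P"
    for Q :: "protocol \<Rightarrow> bool"
  proof (rule cInf_eq_minimum)
    show "4 \<in> {complexity 3 4 P | P. valid_protocol 3 P \<and> Q P}"
      using that(1) valid_forward_to_3 complexity_forward_to_3 by (intro CollectI exI[of _ forward_to_3]) simp
  qed (use that(2) complexity_ge_4 in blast)
  from this[of "solves_AD 3 4"] this[of "solves_CD 3 4"] show ?thesis
    unfolding C_AD_def C_CD_def using solves_forward_to_3 by blast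
qed

end
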